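(* Let $\mathbf v\in\mathbb R_{>0}^m$, $\tau=\sum_iv_i^2k_i$, and assume $\mathcal P_{\mathbf v}(m,\mathbf k,d)\neq\emptyset$. Let $p_{\mathbf v}=\inf\{\mathrm{FP}(\mathcal V,\mathcal W):(\mathcal V,\mathcal W)\in\mathcal{DRS}_{\mathbf v}\}$. Then: (1) the infimum $p_{\mathbf v}$ is attained; (2) for every $(\mathcal V,\mathcal W)\in\mathcal{DRS}_{\mathbf v}$, $$\mathrm{FP}(\mathcal V,\mathcal W)\ \ge\ p_{\mathbf v}\ \ge\ \frac{\tau^4+d^4}{d\,\tau^2};$$ (3) $\mathrm{FP}(\mathcal V,\mathcal W)=\frac{\tau^4+d^4}{d\tau^2}$ if and only if $\mathcal V$ is tight, i.e. $S_{\mathcal V}=\frac{\tau}{d}I_d$, and $\mathcal W=\frac d\tau\mathcal V=\mathcal V^\#$.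
   Context: Fix integers $m,d\ge1$ and $\mathbf k=(k_1,\dots,k_m)\in\mathbb N^m$ with each $k_i\le d$. A system is an $m$-tuple $\mathcal V=(V_i)_{i=1}^m$ with $V_i\in L(\mathbb C^d,\mathbb C^{k_i})$. Its analysis operator is $T_{\mathcal V}x=(V_1x,\dots,V_mx)\in\bigoplus_i\mathbb C^{k_i}$ and its RS operator is $S_{\mathcal V}=T_{\mathcal V}^*T_{\mathcal V}=\sum_iV_i^*V_i$; $\mathcal V$ is a reconstruction system (RS) if $S_{\mathcal V}$ is invertible, and $\mathcal{RS}(m,\mathbf k,d)$ is the set of RS's. Given weights $\mathbf v\in\mathbb R_{>0}^m$, $\mathcal P_{\mathbf v}(m,\mathbf k,d)$ is the set of RS's with $V_iV_i^*=v_i^2I_{k_i}$ for all $i$. The canonical dual is $\mathcal V^\#=(V_iS_{\mathcal V}^{-1})_i$; $\mathcal W\in\mathcal{RS}$ is a dual of $\mathcal V$ if $T_{\mathcal W}^*T_{\mathcal V}=\sum_iW_i^*V_i=I_d$, and $\mathcal D(\mathcal V)$ is the set of duals. $\mathcal{DRS}_{\mathbf v}=\{(\mathcal V,\mathcal W)\in\mathcal P_{\mathbf v}\times\mathcal{RS}(m,\mathbf k,d):\mathcal W\in\mathcal D(\mathcal V)\}$ and the joint potential is $\mathrm{FP}(\mathcal V,\mathcal W)=\operatorname{tr}S_{\mathcal V}^2+\operatorname{tr}S_{\mathcal W}^2$. *)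

theory Defs
  imports "Jordan_Normal_Form.Schur_Decomposition" "Jordan_Normal_Form.Gauss_Jordan_Elimination"
begin

definition is_system :: "nat \<Rightarrow> (nat \<Rightarrow> nat) \<Rightarrow> nat \<Rightarrow> (nat \<Rightarrow> complex mat) \<Rightarrow> bool" where
  "is_system m k d V \<longleftrightarrow> (\<forall>i<m. V i \<in> carrier_mat (k i) d)"

definition mtrace :: "complex mat \<Rightarrow> complex" where
  "mtrace A = (\<Sum>i<dim_row A. A $$ (i, i))"

definition RS_op :: "nat \<Rightarrow> nat \<Rightarrow> (nat \<Rightarrow> complex mat) \<Rightarrow> complex mat" where
  "RS_op m d V = mat d d (\<lambda>(a, b). \<Sum>i<m. (mat_adjoint (V i) * V i) $$ (a, b))"

(* T_W^* T_V = sum_i W_i^* V_i *)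
definition cross_op :: "nat \<Rightarrow> nat \<Rightarrow> (nat \<Rightarrow> complex mat) \<Rightarrow> (nat \<Rightarrow> complex mat) \<Rightarrow> complex mat" where
  "cross_op m d W V = mat d d (\<lambda>(a, b). \<Sum>i<m. (mat_adjoint (W i) * V i) $$ (a, b))"

definition RS :: "nat \<Rightarrow> (nat \<Rightarrow> nat) \<Rightarrow> nat \<Rightarrow> (nat \<Rightarrow> complex mat) set" where
  "RS m k d = {V. is_system m k d V \<and> invertible_mat (RS_op m d V)}"

definition P_v :: "nat \<Rightarrow> (nat \<Rightarrow> nat) \<Rightarrow> nat \<Rightarrow> (nat \<Rightarrow> real) \<Rightarrow> (nat \<Rightarrow> complex mat) set" where
  "P_v m k d v = {V. V \<in> RS m k d \<and>
      (\<forall>i<m. V i * mat_adjoint (V i) = complex_of_real ((v i)\<^sup>2) \<cdot>\<^sub>m 1\<^sub>m (k i))}"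

definition canon_dual :: "nat \<Rightarrow> nat \<Rightarrow> (nat \<Rightarrow> complex mat) \<Rightarrow> (nat \<Rightarrow> complex mat)" where
  "canon_dual m d V = (\<lambda>i. V i * the (mat_inverse (RS_op m d V)))"

definition duals :: "nat \<Rightarrow> (nat \<Rightarrow> nat) \<Rightarrow> nat \<Rightarrow> (nat \<Rightarrow> complex mat) \<Rightarrow> (nat \<Rightarrow> complex mat) set" where
  "duals m k d V = {W. W \<in> RS m k d \<and> cross_op m d W V = 1\<^sub>m d}"

definition DRS :: "nat \<Rightarrow> (nat \<Rightarrow> nat) \<Rightarrow> nat \<Rightarrow> (nat \<Rightarrow> real)
      \<Rightarrow> ((nat \<Rightarrow> complex mat) \<times> (nat \<Rightarrow> complex mat)) set" where
  "DRS m k d v = {(V, W). V \<in> P_v m k d v \<and> W \<in> duals m k d V}"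

(* joint frame potential FP(V,W) = tr S_V^2 + tr S_W^2 (real, since S_V, S_W are selfadjoint) *)
definition FP :: "nat \<Rightarrow> nat \<Rightarrow> (nat \<Rightarrow> complex mat) \<Rightarrow> (nat \<Rightarrow> complex mat) \<Rightarrow> real" where
  "FP m d V W = Re (mtrace (RS_op m d V * RS_op m d V) + mtrace (RS_op m d W * RS_op m d W))"

end

theory Submission
  imports Defs
begin

(* Index the rows of all blocks V_i by pairs (i,c), c < k_i;
   then (T_W^* T_V)_{ab} = sum_{(i,c)} conj (W_i(c,a)) V_i(c,b) ("cross_entry"), tr S_V is the
   squared Hilbert-Schmidt norm ||T_V||^2 ("sys_norm") and tr S_V^2 = sum_{a,b} |(S_V)_{ab}|^2
   ("potential"), so FP(V,W) = potential V + potential W.  Two estimates, each obtained by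
   expanding a sum of squares that is nonnegative, drive the bound:
   (a) for a d x d matrix A, sum |A_ab|^2 >= (Re tr A)^2 / d, with equality only for scalar A;
   (b) if W is a dual of V, then ||T_W||^2 >= d^2 / ||T_V||^2, with equality only for
       W = (d / ||T_V||^2) V  (expand ||T_W - alpha T_V||^2 using Re tr T_W^* T_V = d).
   For V in P_v we have ||T_V||^2 = tau, hence potential V >= tau^2/d and
   potential W >= (d^2/tau)^2/d = d^3/tau^2; the sum is (tau^4 + d^4)/(d tau^2), and the
   equality cases of (a) and (b) characterise the minimisers; for a tight V the canonical dual
   is (d/tau) V.  The infimum is attained by compactness: along a minimising sequence every entry
   is bounded by the fourth root of FP, a subsequence converges entrywise, and the conditions
   defining DRS_v survive the limit (invertibility of S_V and S_W follows from duality). *)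

lemma mat_adjoint_dims [simp]:
  "dim_row (mat_adjoint A) = dim_col A" "dim_col (mat_adjoint A) = dim_row A"
  unfolding mat_adjoint_def by auto

lemma mat_adjoint_index [simp]:
  "i < dim_col A \<Longrightarrow> j < dim_row A \<Longrightarrow> mat_adjoint A $$ (i, j) = cnj (A $$ (j, i))"
  unfolding mat_adjoint_def by (simp add: mat_of_rows_index)

lemma mult_mat_index_sum:
  assumes "A \<in> carrier_mat r n" "B \<in> carrier_mat n c" "i < r" "j < c"
  shows "(A * B) $$ (i, j) = (\<Sum>e<n. A $$ (i, e) * B $$ (e, j))"
  using assms by (auto simp: scalar_prod_def lessThan_atLeast0 intro!: sum.cong)

lemma adjoint_mult_index:
  assumes "A \<in> carrier_mat r c" "B \<in> carrier_mat r c'" "a < c" "b < c'"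
  shows "(mat_adjoint A * B) $$ (a, b) = (\<Sum>x<r. cnj (A $$ (x, a)) * B $$ (x, b))"
  using assms by (auto simp: scalar_prod_def lessThan_atLeast0 intro!: sum.cong)

lemma mult_adjoint_index:
  assumes "A \<in> carrier_mat r c" "a < r" "b < r"
  shows "(A * mat_adjoint A) $$ (a, b) = (\<Sum>x<c. A $$ (a, x) * cnj (A $$ (b, x)))"
  using assms by (auto simp: scalar_prod_def lessThan_atLeast0 intro!: sum.cong)

lemma mtrace_square:
  assumes "A \<in> carrier_mat d d"
  shows "mtrace (A * A) = (\<Sum>a<d. \<Sum>b<d. A $$ (a, b) * A $$ (b, a))"
  using assms unfolding mtrace_def
  by (auto simp: scalar_prod_def lessThan_atLeast0 intro!: sum.cong)

lemma cmod_diff_scaled_sq: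
  fixes w v :: complex and \<alpha> :: real
  shows "(cmod (w - complex_of_real \<alpha> * v))\<^sup>2
    = (cmod w)\<^sup>2 - 2 * \<alpha> * Re (cnj w * v) + \<alpha>\<^sup>2 * (cmod v)\<^sup>2"
  unfolding cmod_power2 by (simp add: power2_eq_square algebra_simps)

lemma Re_cnj_mult: "Re (cnj z * z) = (cmod z)\<^sup>2"
  by (simp only: mult.commute[of "cnj z"] complex_norm_square[symmetric] Re_complex_of_real)

lemma frobenius_ge_trace_sq:
  fixes A :: "complex mat"
  assumes A: "A \<in> carrier_mat d d" and d: "d > 0"
  defines "t \<equiv> (\<Sum>a<d. Re (A $$ (a, a)))"
  shows "t\<^sup>2 / real d \<le> (\<Sum>a<d. \<Sum>b<d. (cmod (A $$ (a, b)))\<^sup>2)"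
    and "(\<Sum>a<d. \<Sum>b<d. (cmod (A $$ (a, b)))\<^sup>2) = t\<^sup>2 / real d
         \<Longrightarrow> A = complex_of_real (t / real d) \<cdot>\<^sub>m 1\<^sub>m d"
proof -
  let ?N = "\<Sum>a<d. \<Sum>b<d. (cmod (A $$ (a, b)))\<^sup>2"
  let ?E = "\<lambda>c. \<Sum>a<d. \<Sum>b<d. (cmod (A $$ (a, b) - (if a = b then complex_of_real c else 0)))\<^sup>2"
  have expand: "?E c = ?N - 2 * c * t + real d * c\<^sup>2" for c
  proof -
    have entry: "(cmod (A $$ (a, b) - (if a = b then complex_of_real c else 0)))\<^sup>2
        = (cmod (A $$ (a, b)))\<^sup>2 - (if a = b then 2 * c * Re (A $$ (a, a)) - c\<^sup>2 else 0)" for a b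
      unfolding cmod_power2 by (auto simp: power2_eq_square algebra_simps)
    show ?thesis unfolding t_def
      by (simp add: entry sum_subtractf sum.distrib sum_distrib_left algebra_simps)
  qed
  have E: "?E (t / real d) = ?N - t\<^sup>2 / real d"
    unfolding expand using d by (simp add: field_simps power2_eq_square)
  have "?E (t / real d) \<ge> 0" by (intro sum_nonneg) auto
  then show "t\<^sup>2 / real d \<le> ?N" using E by simp
  assume "?N = t\<^sup>2 / real d"
  then have "?E (t / real d) = 0" using E by simp
  then have "\<forall>a\<in>{..<d}. \<forall>b\<in>{..<d}.
      (cmod (A $$ (a, b) - (if a = b then complex_of_real (t / real d) else 0)))\<^sup>2 = 0"
    by (simp add: sum_nonneg_eq_0_iff sum_nonneg)
  then show "A = complex_of_real (t / real d) \<cdot>\<^sub>m 1\<^sub>m d"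
    using A by (intro eq_matI) auto
qed

section \<open>Coordinates of systems\<close>

definition row_idx :: "nat \<Rightarrow> (nat \<Rightarrow> nat) \<Rightarrow> (nat \<times> nat) set" where
  "row_idx m k = (SIGMA i:{..<m}. {..<k i})"

lemma finite_row_idx [simp]: "finite (row_idx m k)"
  unfolding row_idx_def by auto

lemma sum_row_idx: "(\<Sum>i<m. \<Sum>c<k i. f i c) = (\<Sum>(i, c)\<in>row_idx m k. f i c)"
  unfolding row_idx_def by (simp add: sum.Sigma)

definition cross_entry :: "nat \<Rightarrow> (nat \<Rightarrow> nat) \<Rightarrow> (nat \<Rightarrow> complex mat) \<Rightarrow> (nat \<Rightarrow> complex mat)
    \<Rightarrow> nat \<Rightarrow> nat \<Rightarrow> complex" where
  "cross_entry m k W V a b = (\<Sum>(i, c)\<in>row_idx m k. cnj (W i $$ (c, a)) * V i $$ (c, b))"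

definition sys_norm :: "nat \<Rightarrow> (nat \<Rightarrow> nat) \<Rightarrow> nat \<Rightarrow> (nat \<Rightarrow> complex mat) \<Rightarrow> real" where
  "sys_norm m k d V = (\<Sum>(i, c)\<in>row_idx m k. \<Sum>a<d. (cmod (V i $$ (c, a)))\<^sup>2)"

definition potential :: "nat \<Rightarrow> (nat \<Rightarrow> nat) \<Rightarrow> nat \<Rightarrow> (nat \<Rightarrow> complex mat) \<Rightarrow> real" where
  "potential m k d V = (\<Sum>a<d. \<Sum>b<d. (cmod (cross_entry m k V V a b))\<^sup>2)"

lemma potential_nonneg: "potential m k d V \<ge> 0"
  unfolding potential_def by (intro sum_nonneg) auto

lemma cross_op_dims [simp]:
  "cross_op m d W V \<in> carrier_mat d d" "RS_op m d V \<in> carrier_mat d d"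
  "dim_row (RS_op m d V) = d" "dim_col (RS_op m d V) = d"
  "dim_row (cross_op m d W V) = d" "dim_col (cross_op m d W V) = d"
  unfolding cross_op_def RS_op_def by auto

lemma cross_op_index:
  assumes "is_system m k d W" "is_system m k d V" "a < d" "b < d"
  shows "cross_op m d W V $$ (a, b) = cross_entry m k W V a b"
proof -
  have "cross_op m d W V $$ (a, b) = (\<Sum>i<m. \<Sum>c<k i. cnj (W i $$ (c, a)) * V i $$ (c, b))"
    unfolding cross_op_def using assms unfolding is_system_def
    by (auto intro!: sum.cong adjoint_mult_index)
  then show ?thesis unfolding cross_entry_def sum_row_idx by simp
qed

lemma RS_op_index:
  assumes "is_system m k d V" "a < d" "b < d"
  shows "RS_op m d V $$ (a, b) = cross_entry m k V V a b"
proof -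
  have "RS_op m d V = cross_op m d V V" unfolding RS_op_def cross_op_def by simp
  then show ?thesis using cross_op_index[OF assms(1,1,2,3)] by simp
qed

lemma cross_entry_cnj: "cross_entry m k V W b a = cnj (cross_entry m k W V a b)"
  unfolding cross_entry_def by (simp add: case_prod_unfold mult.commute)

lemma cross_op_sym:
  assumes sysV: "is_system m k d V" and sysW: "is_system m k d W"
    and dual: "cross_op m d W V = 1\<^sub>m d"
  shows "cross_op m d V W = 1\<^sub>m d"
proof (rule eq_matI)
  fix a b assume "a < dim_row (1\<^sub>m d)" "b < dim_col (1\<^sub>m d)"
  then have ab: "a < d" "b < d" by auto
  have "cross_op m d V W $$ (a, b) = cnj (cross_op m d W V $$ (b, a))"
    using cross_op_index[OF sysV sysW ab] cross_op_index[OF sysW sysV ab(2,1)]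
      cross_entry_cnj[of m k V W a b]
    by simp
  then show "cross_op m d V W $$ (a, b) = 1\<^sub>m d $$ (a, b)" using dual ab by simp
qed auto

lemma trace_cross_entry:
  "(\<Sum>a<d. Re (cross_entry m k W V a a))
    = (\<Sum>(i, c)\<in>row_idx m k. \<Sum>a<d. Re (cnj (W i $$ (c, a)) * V i $$ (c, a)))"
  unfolding cross_entry_def Re_sum by (subst sum.swap) (simp add: case_prod_unfold)

lemma trace_RS_op:
  assumes "is_system m k d V"
  shows "(\<Sum>a<d. Re (RS_op m d V $$ (a, a))) = sys_norm m k d V"
proof -
  have "(\<Sum>a<d. Re (RS_op m d V $$ (a, a))) = (\<Sum>a<d. Re (cross_entry m k V V a a))"
    using RS_op_index[OF assms] by simp
  also have "\<dots> = sys_norm m k d V"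
    unfolding trace_cross_entry sys_norm_def by (simp only: Re_cnj_mult)
  finally show ?thesis .
qed

lemma potential_RS_op:
  assumes "is_system m k d V"
  shows "potential m k d V = (\<Sum>a<d. \<Sum>b<d. (cmod (RS_op m d V $$ (a, b)))\<^sup>2)"
  unfolding potential_def using RS_op_index[OF assms] by simp

lemma Re_mtrace_RS_op_sq:
  assumes "is_system m k d V"
  shows "Re (mtrace (RS_op m d V * RS_op m d V)) = potential m k d V"
proof -
  have "cross_entry m k V V a b * cross_entry m k V V b a
      = complex_of_real ((cmod (cross_entry m k V V a b))\<^sup>2)" for a b
    using cross_entry_cnj[of m k V V b a] complex_norm_square[of "cross_entry m k V V a b"]
    by simp
  then show ?thesis
    unfolding mtrace_square[OF cross_op_dims(2)] potential_def using RS_op_index[OF assms]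
    by simp
qed

lemma FP_potential:
  assumes "is_system m k d V" "is_system m k d W"
  shows "FP m d V W = potential m k d V + potential m k d W"
  unfolding FP_def using Re_mtrace_RS_op_sq[OF assms(1)] Re_mtrace_RS_op_sq[OF assms(2)] by simp

section \<open>The two estimates\<close>

(* Each row of a block V_i with V_i V_i^* = v_i^2 I has squared norm v_i^2, so tr S_V = tau. *)
lemma sys_norm_equal_norm:
  assumes sys: "is_system m k d V"
    and norm: "\<forall>i<m. V i * mat_adjoint (V i) = complex_of_real ((v i)\<^sup>2) \<cdot>\<^sub>m 1\<^sub>m (k i)"
  shows "sys_norm m k d V = (\<Sum>i<m. (v i)\<^sup>2 * real (k i))"
proof -
  have row: "(\<Sum>a<d. (cmod (V i $$ (c, a)))\<^sup>2) = (v i)\<^sup>2" if "i < m" "c < k i" for i c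
  proof -
    have Vi: "V i \<in> carrier_mat (k i) d" using sys that unfolding is_system_def by auto
    have "(\<Sum>a<d. V i $$ (c, a) * cnj (V i $$ (c, a))) = (V i * mat_adjoint (V i)) $$ (c, c)"
      using mult_adjoint_index[OF Vi that(2) that(2)] by simp
    also have "\<dots> = complex_of_real ((v i)\<^sup>2)" using norm that Vi by auto
    finally have "Re (\<Sum>a<d. cnj (V i $$ (c, a)) * V i $$ (c, a)) = (v i)\<^sup>2"
      by (simp add: mult.commute)
    then show ?thesis by (simp only: Re_sum Re_cnj_mult)
  qed
  have "sys_norm m k d V = (\<Sum>(i, c)\<in>row_idx m k. (v i)\<^sup>2)"
    unfolding sys_norm_def by (intro sum.cong refl) (auto simp: row_idx_def row)
  then show ?thesis unfolding sum_row_idx[symmetric] by (simp add: mult.commute)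
qed

lemma potential_ge_sys_norm:
  assumes sys: "is_system m k d V" and d: "d > 0"
  shows "(sys_norm m k d V)\<^sup>2 / real d \<le> potential m k d V"
    and "potential m k d V = (sys_norm m k d V)\<^sup>2 / real d
         \<Longrightarrow> RS_op m d V = complex_of_real (sys_norm m k d V / real d) \<cdot>\<^sub>m 1\<^sub>m d"
  using frobenius_ge_trace_sq[OF cross_op_dims(2) d, of m V]
  unfolding trace_RS_op[OF sys] potential_RS_op[OF sys] by auto

(* Estimate (b): a dual W of V satisfies ||T_W||^2 >= d^2 / ||T_V||^2, with equality only for
   W = (d / ||T_V||^2) V.  Expand ||T_W - alpha T_V||^2 >= 0, using Re tr T_W^* T_V = d. *)
lemma dual_sys_norm_lower:
  assumes sysV: "is_system m k d V" and sysW: "is_system m k d W"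
    and dual: "cross_op m d W V = 1\<^sub>m d" and pos: "sys_norm m k d V > 0"
  defines "\<alpha> \<equiv> real d / sys_norm m k d V"
  shows "real d ^ 2 / sys_norm m k d V \<le> sys_norm m k d W"
    and "sys_norm m k d W = real d ^ 2 / sys_norm m k d V
         \<Longrightarrow> \<forall>i<m. W i = complex_of_real \<alpha> \<cdot>\<^sub>m V i"
proof -
  have inner: "(\<Sum>(i, c)\<in>row_idx m k. \<Sum>a<d. Re (cnj (W i $$ (c, a)) * V i $$ (c, a))) = real d"
  proof -
    have "(\<Sum>a<d. Re (cross_entry m k W V a a)) = (\<Sum>a<d. Re (cross_op m d W V $$ (a, a)))"
      using cross_op_index[OF sysW sysV] by simp
    also have "\<dots> = real d" using dual by simp
    finally show ?thesis unfolding trace_cross_entry .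
  qed
  define D where "D = (\<Sum>(i, c)\<in>row_idx m k.
      \<Sum>a<d. (cmod (W i $$ (c, a) - complex_of_real \<alpha> * V i $$ (c, a)))\<^sup>2)"
  have "D = sys_norm m k d W
      - 2 * \<alpha> * (\<Sum>(i, c)\<in>row_idx m k. \<Sum>a<d. Re (cnj (W i $$ (c, a)) * V i $$ (c, a)))
      + \<alpha>\<^sup>2 * sys_norm m k d V"
    unfolding D_def sys_norm_def cmod_diff_scaled_sq
    by (simp only: case_prod_unfold sum_subtractf sum.distrib sum_distrib_left)
  also have "\<dots> = sys_norm m k d W - real d ^ 2 / sys_norm m k d V"
    unfolding inner \<alpha>_def using pos by (simp add: field_simps power2_eq_square)
  finally have D: "D = sys_norm m k d W - real d ^ 2 / sys_norm m k d V" .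
  have "D \<ge> 0" unfolding D_def by (auto simp: case_prod_unfold intro!: sum_nonneg)
  then show "real d ^ 2 / sys_norm m k d V \<le> sys_norm m k d W" using D by simp
  assume "sys_norm m k d W = real d ^ 2 / sys_norm m k d V"
  then have "D = 0" using D by simp
  then have zero: "\<forall>p\<in>row_idx m k. \<forall>a\<in>{..<d}.
      (cmod (W (fst p) $$ (snd p, a) - complex_of_real \<alpha> * V (fst p) $$ (snd p, a)))\<^sup>2 = 0"
    unfolding D_def case_prod_unfold
    by (subst (asm) sum_nonneg_eq_0_iff) (auto simp: sum_nonneg_eq_0_iff intro!: sum_nonneg)
  show "\<forall>i<m. W i = complex_of_real \<alpha> \<cdot>\<^sub>m V i"
  proof (intro allI impI)
    fix i assume i: "i < m"
    have Wi: "W i \<in> carrier_mat (k i) d" and Vi: "V i \<in> carrier_mat (k i) d"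
      using sysV sysW i unfolding is_system_def by auto
    have "W i $$ (c, a) = complex_of_real \<alpha> * V i $$ (c, a)" if "c < k i" "a < d" for c a
      using zero that i unfolding row_idx_def by fastforce
    then show "W i = complex_of_real \<alpha> \<cdot>\<^sub>m V i"
      using Wi Vi by (intro eq_matI) auto
  qed
qed

lemma potential_tight:
  assumes sys: "is_system m k d V" and S: "RS_op m d V = complex_of_real c \<cdot>\<^sub>m 1\<^sub>m d"
  shows "potential m k d V = real d * c\<^sup>2"
proof -
  have "(cmod (RS_op m d V $$ (a, b)))\<^sup>2 = (if a = b then c\<^sup>2 else 0)" if "a < d" "b < d" for a b
    using that by (simp add: S)
  then have "potential m k d V = (\<Sum>a<d. \<Sum>b<d. if a = b then c\<^sup>2 else 0)"
    unfolding potential_RS_op[OF sys] by (intro sum.cong refl) auto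
  then show ?thesis by simp
qed

lemma potential_scale:
  assumes sys: "is_system m k d V" and W: "\<forall>i<m. W i = complex_of_real \<alpha> \<cdot>\<^sub>m V i"
  shows "potential m k d W = \<alpha> ^ 4 * potential m k d V"
proof -
  have entry: "cross_entry m k W W a b = complex_of_real (\<alpha>\<^sup>2) * cross_entry m k V V a b"
    if "a < d" "b < d" for a b
  proof -
    have "cnj (W i $$ (c, a)) * W i $$ (c, b)
        = complex_of_real (\<alpha>\<^sup>2) * (cnj (V i $$ (c, a)) * V i $$ (c, b))"
      if "(i, c) \<in> row_idx m k" for i c
    proof -
      have "i < m" "c < k i" using that unfolding row_idx_def by auto
      then show ?thesis using sys W \<open>a < d\<close> \<open>b < d\<close> unfolding is_system_def
        by (auto simp: power2_eq_square)
    qed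
    then show ?thesis unfolding cross_entry_def sum_distrib_left
      by (intro sum.cong refl) auto
  qed
  have "(cmod (complex_of_real (\<alpha>\<^sup>2) * z))\<^sup>2 = \<alpha> ^ 4 * (cmod z)\<^sup>2" for z
  proof -
    have "cmod (complex_of_real (\<alpha>\<^sup>2)) = \<alpha>\<^sup>2" by (simp only: norm_of_real) simp
    then have "(cmod (complex_of_real (\<alpha>\<^sup>2) * z))\<^sup>2 = (\<alpha>\<^sup>2 * cmod z)\<^sup>2"
      by (simp only: norm_mult)
    then show ?thesis by (simp add: power_mult_distrib flip: power_mult)
  qed
  then have "potential m k d W = (\<Sum>a<d. \<Sum>b<d. \<alpha> ^ 4 * (cmod (cross_entry m k V V a b))\<^sup>2)"
    unfolding potential_def by (intro sum.cong refl) (simp add: entry)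
  then show ?thesis unfolding potential_def by (simp add: sum_distrib_left)
qed

section \<open>Duality forces invertibility; the canonical dual\<close>

lemma cross_entry_quadratic_form:
  "(\<Sum>a<d. cnj (x a) * (\<Sum>b<d. cross_entry m k V V a b * x b))
   = (\<Sum>p\<in>row_idx m k. cnj (\<Sum>b<d. V (fst p) $$ (snd p, b) * x b)
                         * (\<Sum>b<d. V (fst p) $$ (snd p, b) * x b))"
proof -
  have "(\<Sum>a<d. cnj (x a) * (\<Sum>b<d. cross_entry m k V V a b * x b))
     = (\<Sum>a<d. \<Sum>b<d. \<Sum>p\<in>row_idx m k.
          cnj (x a) * cnj (V (fst p) $$ (snd p, a)) * V (fst p) $$ (snd p, b) * x b)"
    unfolding cross_entry_def case_prod_unfold
    by (simp add: sum_distrib_left sum_distrib_right mult.assoc)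
  also have "\<dots> = (\<Sum>a<d. \<Sum>p\<in>row_idx m k. \<Sum>b<d.
          cnj (x a) * cnj (V (fst p) $$ (snd p, a)) * V (fst p) $$ (snd p, b) * x b)"
    by (rule sum.cong[OF refl], rule sum.swap)
  also have "\<dots> = (\<Sum>p\<in>row_idx m k. \<Sum>a<d. \<Sum>b<d.
          cnj (x a) * cnj (V (fst p) $$ (snd p, a)) * V (fst p) $$ (snd p, b) * x b)"
    by (rule sum.swap)
  also have "\<dots> = (\<Sum>p\<in>row_idx m k. cnj (\<Sum>b<d. V (fst p) $$ (snd p, b) * x b)
                                     * (\<Sum>b<d. V (fst p) $$ (snd p, b) * x b))"
    by (simp add: sum_product mult.commute mult.left_commute) (rule sum.cong[OF refl], rule sum.swap)
  finally show ?thesis .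
qed

lemma cross_entry_mult_vec:
  "(\<Sum>b<d. cross_entry m k W V a b * x b)
   = (\<Sum>p\<in>row_idx m k. cnj (W (fst p) $$ (snd p, a)) * (\<Sum>b<d. V (fst p) $$ (snd p, b) * x b))"
  unfolding cross_entry_def case_prod_unfold
  by (simp add: sum_distrib_left sum_distrib_right mult.assoc) (rule sum.swap)

lemma sum_cnj_mult_eq_0:
  assumes "finite A" "(\<Sum>p\<in>A. cnj (y p) * y p) = 0"
  shows "\<forall>p\<in>A. y p = 0"
proof -
  have "(\<Sum>p\<in>A. (cmod (y p))\<^sup>2) = Re (\<Sum>p\<in>A. cnj (y p) * y p)"
    by (simp only: Re_sum Re_cnj_mult)
  then have "(\<Sum>p\<in>A. (cmod (y p))\<^sup>2) = 0" using assms by simp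
  then have "\<forall>p\<in>A. (cmod (y p))\<^sup>2 = 0" using assms(1) by (subst (asm) sum_nonneg_eq_0_iff) auto
  then show ?thesis by simp
qed

(* If V has a dual W then S_V is nonsingular: S_V x = 0 gives <x, S_V x> = ||T_V x||^2 = 0,
   hence x = T_W^* T_V x = 0. *)
lemma det_RS_op_nonzero:
  assumes sysV: "is_system m k d V" and sysW: "is_system m k d W"
    and dual: "cross_op m d W V = 1\<^sub>m d"
  shows "det (RS_op m d V) \<noteq> 0"
proof
  assume "det (RS_op m d V) = 0"
  then obtain x where x: "x \<in> carrier_vec d" "x \<noteq> 0\<^sub>v d" "RS_op m d V *\<^sub>v x = 0\<^sub>v d"
    using det_0_iff_vec_prod_zero[OF cross_op_dims(2)] by blast
  define y where "y p = (\<Sum>b<d. V (fst p) $$ (snd p, b) * x $ b)" for p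
  have Sx: "(\<Sum>b<d. cross_entry m k V V a b * x $ b) = 0" if "a < d" for a
  proof -
    have "(RS_op m d V *\<^sub>v x) $ a = (\<Sum>b<d. cross_entry m k V V a b * x $ b)"
      using that x(1) RS_op_index[OF sysV that]
      by (auto simp: scalar_prod_def lessThan_atLeast0 intro!: sum.cong)
    then show ?thesis using x(3) that by simp
  qed
  have "(\<Sum>p\<in>row_idx m k. cnj (y p) * y p) = 0"
    using cross_entry_quadratic_form[where x="\<lambda>b. x $ b" and d=d and m=m and k=k and V=V] Sx
    unfolding y_def by simp
  then have y0: "\<forall>p\<in>row_idx m k. y p = 0" by (intro sum_cnj_mult_eq_0) auto
  have "x $ a = 0" if "a < d" for a
  proof -
    have "(\<Sum>b<d. cross_op m d W V $$ (a, b) * x $ b) = (\<Sum>b<d. if a = b then x $ b else 0)"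
      using that by (intro sum.cong) (auto simp: dual)
    then have "x $ a = (\<Sum>b<d. cross_op m d W V $$ (a, b) * x $ b)"
      using that by simp
    also have "\<dots> = (\<Sum>b<d. cross_entry m k W V a b * x $ b)"
      using cross_op_index[OF sysW sysV that] by simp
    also have "\<dots> = 0" unfolding cross_entry_mult_vec using y0 unfolding y_def by simp
    finally show ?thesis .
  qed
  then have "x = 0\<^sub>v d" using x(1) by (intro eq_vecI) auto
  with x(2) show False by simp
qed

lemma invertible_if_det_nonzero:
  assumes A: "A \<in> carrier_mat n n" and "det A \<noteq> (0::complex)"
  shows "invertible_mat A"
proof -
  have "A \<in> Units (ring_mat TYPE(complex) n ())" by (rule det_non_zero_imp_unit[OF assms])
  then obtain B where B: "B \<in> carrier_mat n n" "B * A = 1\<^sub>m n" "A * B = 1\<^sub>m n"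
    unfolding Units_def by (auto simp: ring_mat_simps)
  then show ?thesis unfolding invertible_mat_def inverts_mat_def using A by auto
qed

lemma mat_inverse_of_invertible:
  assumes A: "A \<in> carrier_mat n n" and inv: "invertible_mat (A :: complex mat)"
  obtains B where "mat_inverse A = Some B" "A * B = 1\<^sub>m n" "B * A = 1\<^sub>m n" "B \<in> carrier_mat n n"
proof (cases "mat_inverse A")
  case None
  from inv obtain B where AB: "A * B = 1\<^sub>m (dim_row A)" "B * A = 1\<^sub>m (dim_row B)"
    unfolding invertible_mat_def inverts_mat_def by auto
  have "B \<in> carrier_mat n n" using AB A
    by (metis carrier_matD carrier_matI index_mult_mat(2,3) index_one_mat(2,3))
  then have "A \<in> Units (ring_mat TYPE(complex) n ())"
    unfolding Units_def using A AB by (auto simp: ring_mat_simps)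
  with mat_inverse(1)[OF A None, of "()"] show ?thesis by blast
next
  case (Some B)
  then show ?thesis using mat_inverse(2)[OF A Some] that by auto
qed

(* Membership in DRS_v needs no invertibility hypothesis: it follows from duality. *)
lemma DRS_intro:
  assumes sysV: "is_system m k d V" and sysW: "is_system m k d W"
    and norm: "\<forall>i<m. V i * mat_adjoint (V i) = complex_of_real ((v i)\<^sup>2) \<cdot>\<^sub>m 1\<^sub>m (k i)"
    and dual: "cross_op m d W V = 1\<^sub>m d"
  shows "(V, W) \<in> DRS m k d v"
proof -
  have "invertible_mat (RS_op m d V)"
    by (rule invertible_if_det_nonzero[OF cross_op_dims(2) det_RS_op_nonzero[OF sysV sysW dual]])
  moreover have "invertible_mat (RS_op m d W)"
    by (rule invertible_if_det_nonzero[OF cross_op_dims(2)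
          det_RS_op_nonzero[OF sysW sysV cross_op_sym[OF sysV sysW dual]]])
  ultimately show ?thesis
    unfolding DRS_def P_v_def RS_def duals_def using sysV sysW norm dual by auto
qed

lemma DRS_D:
  assumes "(V, W) \<in> DRS m k d v"
  shows "is_system m k d V" "is_system m k d W"
    "\<forall>i<m. V i * mat_adjoint (V i) = complex_of_real ((v i)\<^sup>2) \<cdot>\<^sub>m 1\<^sub>m (k i)"
    "cross_op m d W V = 1\<^sub>m d"
  using assms unfolding DRS_def P_v_def RS_def duals_def by auto

lemma canon_dual_is_dual:
  assumes sysV: "is_system m k d V" and inv: "invertible_mat (RS_op m d V)"
  shows "is_system m k d (canon_dual m d V)" "cross_op m d (canon_dual m d V) V = 1\<^sub>m d"
proof -
  obtain B where B: "mat_inverse (RS_op m d V) = Some B" "RS_op m d V * B = 1\<^sub>m d"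
    "B \<in> carrier_mat d d"
    using mat_inverse_of_invertible[OF cross_op_dims(2) inv] by metis
  have cd: "canon_dual m d V = (\<lambda>i. V i * B)" unfolding canon_dual_def B by simp
  have Vi: "i < m \<Longrightarrow> V i \<in> carrier_mat (k i) d" for i using sysV unfolding is_system_def by auto
  show sysW: "is_system m k d (canon_dual m d V)"
    unfolding cd is_system_def using Vi B(3) by (auto intro!: mult_carrier_mat)
  show "cross_op m d (canon_dual m d V) V = 1\<^sub>m d"
  proof (rule eq_matI)
    fix a b assume "a < dim_row (1\<^sub>m d)" "b < dim_col (1\<^sub>m d)"
    then have ab: "a < d" "b < d" by auto
    have "cross_op m d (canon_dual m d V) V $$ (a, b) = cross_entry m k (\<lambda>i. V i * B) V a b"
      using cross_op_index[OF sysW sysV ab] cd by simp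
    also have "\<dots> = (\<Sum>p\<in>row_idx m k.
        cnj (\<Sum>e<d. V (fst p) $$ (snd p, e) * B $$ (e, a)) * V (fst p) $$ (snd p, b))"
      unfolding cross_entry_def case_prod_unfold
      by (intro sum.cong refl, subst mult_mat_index_sum[OF Vi B(3)]) (auto simp: row_idx_def ab)
    also have "\<dots> = (\<Sum>p\<in>row_idx m k. \<Sum>e<d.
        cnj (B $$ (e, a)) * (cnj (V (fst p) $$ (snd p, e)) * V (fst p) $$ (snd p, b)))"
      by (simp only: cnj_sum sum_distrib_right complex_cnj_mult) (intro sum.cong refl, simp only: ac_simps)
    also have "\<dots> = (\<Sum>e<d. cnj (B $$ (e, a)) * cross_entry m k V V e b)"
      unfolding cross_entry_def case_prod_unfold sum_distrib_left by (rule sum.swap)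
    also have "\<dots> = (\<Sum>e<d. cnj (B $$ (e, a)) * cnj (RS_op m d V $$ (b, e)))"
      using RS_op_index[OF sysV ab(2)] cross_entry_cnj[of m k V V _ b]
      by (intro sum.cong refl) auto
    also have "\<dots> = cnj ((RS_op m d V * B) $$ (b, a))"
      using mult_mat_index_sum[OF cross_op_dims(2) B(3) ab(2) ab(1)] by (simp add: mult.commute)
    also have "\<dots> = 1\<^sub>m d $$ (a, b)" using B(2) ab by simp
    finally show "cross_op m d (canon_dual m d V) V $$ (a, b) = 1\<^sub>m d $$ (a, b)" .
  qed auto
qed

lemma DRS_nonempty:
  assumes "P_v m k d v \<noteq> {}"
  shows "DRS m k d v \<noteq> {}"
proof -
  obtain V where "V \<in> P_v m k d v" using assms by auto
  then have V: "is_system m k d V" "invertible_mat (RS_op m d V)"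
    "\<forall>i<m. V i * mat_adjoint (V i) = complex_of_real ((v i)\<^sup>2) \<cdot>\<^sub>m 1\<^sub>m (k i)"
    unfolding P_v_def RS_def by auto
  show ?thesis
    using DRS_intro[OF V(1) canon_dual_is_dual(1)[OF V(1,2)] V(3) canon_dual_is_dual(2)[OF V(1,2)]]
    by auto
qed

lemma canon_dual_tight:
  assumes sysV: "is_system m k d V" and S: "RS_op m d V = complex_of_real c \<cdot>\<^sub>m 1\<^sub>m d"
    and c: "c > 0" and i: "i < m"
  shows "canon_dual m d V i = complex_of_real (1 / c) \<cdot>\<^sub>m V i"
proof -
  let ?B = "complex_of_real (1 / c) \<cdot>\<^sub>m 1\<^sub>m d"
  have inverse: "RS_op m d V * ?B = 1\<^sub>m d" "?B * RS_op m d V = 1\<^sub>m d"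
    unfolding S using c by (auto simp: mult_smult_distrib)
  then have "invertible_mat (RS_op m d V)"
    unfolding invertible_mat_def inverts_mat_def by (auto simp: square_mat.simps)
  then obtain B where B: "mat_inverse (RS_op m d V) = Some B" "B * RS_op m d V = 1\<^sub>m d"
    "B \<in> carrier_mat d d"
    using mat_inverse_of_invertible[OF cross_op_dims(2)] by metis
  have "B = B * (RS_op m d V * ?B)" using B(3) inverse(1) by simp
  also have "\<dots> = ?B" using B(2,3) by (simp add: assoc_mult_mat[symmetric, of B d d _ d _ d])
  finally have "B = ?B" .
  have Vi: "V i \<in> carrier_mat (k i) d" using sysV i unfolding is_system_def by auto
  show ?thesis unfolding canon_dual_def B(1) \<open>B = ?B\<close>
    using mult_smult_distrib[OF Vi one_carrier_mat] Vi by simp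
qed

section \<open>The lower bound and its equality case\<close>

(* Both potentials are bounded below on DRS_v: tr S_V^2 >= tau^2/d by (a) since tr S_V = tau,
   and tr S_W^2 >= (tr S_W)^2/d >= (d^2/tau)^2/d by (a) and (b); equality pins down S_V resp. W. *)
lemma DRS_potential_bounds:
  assumes VW: "(V, W) \<in> DRS m k d v" and d: "d > 0"
    and tau: "\<tau> = (\<Sum>i<m. (v i)\<^sup>2 * real (k i))" and tau_pos: "\<tau> > 0"
  shows "\<tau>\<^sup>2 / real d \<le> potential m k d V"
    and "potential m k d V = \<tau>\<^sup>2 / real d
         \<Longrightarrow> RS_op m d V = complex_of_real (\<tau> / real d) \<cdot>\<^sub>m 1\<^sub>m d"
    and "real d ^ 3 / \<tau>\<^sup>2 \<le> potential m k d W"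
    and "potential m k d W = real d ^ 3 / \<tau>\<^sup>2
         \<Longrightarrow> \<forall>i<m. W i = complex_of_real (real d / \<tau>) \<cdot>\<^sub>m V i"
proof -
  note D = DRS_D[OF VW]
  have normV: "sys_norm m k d V = \<tau>" using sys_norm_equal_norm[OF D(1) D(3)] tau by simp
  show "\<tau>\<^sup>2 / real d \<le> potential m k d V"
    and "potential m k d V = \<tau>\<^sup>2 / real d
         \<Longrightarrow> RS_op m d V = complex_of_real (\<tau> / real d) \<cdot>\<^sub>m 1\<^sub>m d"
    using potential_ge_sys_norm[OF D(1) d] unfolding normV by auto
  let ?t = "sys_norm m k d W" and ?lb = "real d ^ 2 / \<tau>"
  have t_ge: "?lb \<le> ?t" using dual_sys_norm_lower(1)[OF D(1,2,4)] normV tau_pos by simp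
  have pot_W: "?t\<^sup>2 / real d \<le> potential m k d W" by (rule potential_ge_sys_norm(1)[OF D(2) d])
  have bound: "real d ^ 3 / \<tau>\<^sup>2 = ?lb\<^sup>2 / real d"
    using d by (simp add: field_simps power2_eq_square power3_eq_cube)
  have "?lb\<^sup>2 \<le> ?t\<^sup>2" using t_ge tau_pos by (intro power_mono) auto
  then have "?lb\<^sup>2 / real d \<le> ?t\<^sup>2 / real d" by (rule divide_right_mono) simp
  then show "real d ^ 3 / \<tau>\<^sup>2 \<le> potential m k d W" using pot_W bound by linarith
  assume "potential m k d W = real d ^ 3 / \<tau>\<^sup>2"
  then have "?t\<^sup>2 / real d \<le> ?lb\<^sup>2 / real d" using pot_W bound by linarith
  then have "?t\<^sup>2 \<le> ?lb\<^sup>2" using d by (simp add: divide_le_cancel)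
  then have "?t \<le> ?lb" by (rule power2_le_imp_le) (use tau_pos in simp)
  then have "?t = real d ^ 2 / sys_norm m k d V" using t_ge normV by simp
  then show "\<forall>i<m. W i = complex_of_real (real d / \<tau>) \<cdot>\<^sub>m V i"
    using dual_sys_norm_lower(2)[OF D(1,2,4)] normV tau_pos by simp
qed

lemma bound_split:
  fixes x y :: real
  assumes "x > 0" "y > 0"
  shows "(x ^ 4 + y ^ 4) / (y * x\<^sup>2) = x\<^sup>2 / y + y ^ 3 / x\<^sup>2"
  using assms by (simp add: field_simps eval_nat_numeral)

lemma FP_lower_bound:
  assumes VW: "(V, W) \<in> DRS m k d v" and d: "d > 0"
    and tau: "\<tau> = (\<Sum>i<m. (v i)\<^sup>2 * real (k i))" and tau_pos: "\<tau> > 0"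
  shows "(\<tau> ^ 4 + real d ^ 4) / (real d * \<tau>\<^sup>2) \<le> FP m d V W"
  using DRS_potential_bounds(1,3)[OF assms] bound_split[OF tau_pos, of "real d"] d
    FP_potential[OF DRS_D(1,2)[OF VW]]
  by simp

lemma FP_eq_bound_iff:
  assumes VW: "(V, W) \<in> DRS m k d v" and d: "d > 0"
    and tau: "\<tau> = (\<Sum>i<m. (v i)\<^sup>2 * real (k i))" and tau_pos: "\<tau> > 0"
  shows "FP m d V W = (\<tau> ^ 4 + real d ^ 4) / (real d * \<tau>\<^sup>2) \<longleftrightarrow>
    (RS_op m d V = complex_of_real (\<tau> / real d) \<cdot>\<^sub>m 1\<^sub>m d
     \<and> (\<forall>i<m. W i = complex_of_real (real d / \<tau>) \<cdot>\<^sub>m V i)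
     \<and> (\<forall>i<m. W i = canon_dual m d V i))"
    (is "_ = ?bound \<longleftrightarrow> ?tight \<and> ?scaled \<and> ?canon")
proof
  note D = DRS_D[OF VW]
  note bounds = DRS_potential_bounds[OF assms]
  have split: "?bound = \<tau>\<^sup>2 / real d + real d ^ 3 / \<tau>\<^sup>2"
    using bound_split[OF tau_pos, of "real d"] d by simp
  have FP: "FP m d V W = potential m k d V + potential m k d W" by (rule FP_potential[OF D(1,2)])
  {
    assume "FP m d V W = ?bound"
    then have "potential m k d V = \<tau>\<^sup>2 / real d" "potential m k d W = real d ^ 3 / \<tau>\<^sup>2"
      using bounds(1,3) FP split by linarith+
    then have tight: ?tight and scaled: ?scaled using bounds(2,4) by auto
    have ?canon using canon_dual_tight[OF D(1) tight] scaled tau_pos d by simp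
    then show "?tight \<and> ?scaled \<and> ?canon" using tight scaled by simp
  }
  assume "?tight \<and> ?scaled \<and> ?canon"
  then have "potential m k d V = real d * (\<tau> / real d)\<^sup>2"
    and "potential m k d W = (real d / \<tau>) ^ 4 * potential m k d V"
    using potential_tight[OF D(1)] potential_scale[OF D(1)] by auto
  then show "FP m d V W = ?bound"
    unfolding FP split using tau_pos d by (simp add: field_simps eval_nat_numeral)
qed

section \<open>Attainment of the infimum\<close>

lemma bounded_real_convergent_subseq:
  fixes x :: "nat \<Rightarrow> real"
  assumes "\<And>n. \<bar>x n\<bar> \<le> B"
  shows "\<exists>s. strict_mono s \<and> convergent (x \<circ> s)"
proof -
  obtain s where s: "strict_mono s" "monoseq (\<lambda>n. x (s n))" using seq_monosub by blast
  have "Bseq (\<lambda>n. x (s n))" using assms by (intro BseqI') auto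
  then have "convergent (\<lambda>n. x (s n))" using s(2) by (rule Bseq_monoseq_convergent)
  then show ?thesis using s(1) by (auto simp: o_def)
qed

lemma bounded_complex_convergent_subseq:
  fixes z :: "nat \<Rightarrow> complex"
  assumes bound: "\<And>n. cmod (z n) \<le> B"
  shows "\<exists>s. strict_mono s \<and> convergent (z \<circ> s)"
proof -
  have Re_bound: "\<bar>Re (z n)\<bar> \<le> B" and Im_bound: "\<bar>Im (z n)\<bar> \<le> B" for n
    using bound[of n] abs_Re_le_cmod[of "z n"] abs_Im_le_cmod[of "z n"] by linarith+
  obtain s1 where s1: "strict_mono s1" "convergent (\<lambda>n. Re (z (s1 n)))"
    using bounded_real_convergent_subseq[of "\<lambda>n. Re (z n)", OF Re_bound] by (auto simp: o_def)
  obtain s2 where s2: "strict_mono s2" "convergent (\<lambda>n. Im (z (s1 (s2 n))))"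
    using bounded_real_convergent_subseq[of "\<lambda>n. Im (z (s1 n))", OF Im_bound] by (auto simp: o_def)
  have "convergent (\<lambda>n. Re (z (s1 (s2 n))))"
    using convergent_subseq_convergent[OF s1(2) s2(1)] by (simp add: o_def)
  then obtain a b where "(\<lambda>n. Re (z (s1 (s2 n)))) \<longlonglongrightarrow> a" "(\<lambda>n. Im (z (s1 (s2 n)))) \<longlonglongrightarrow> b"
    using s2(2) unfolding convergent_def by blast
  then have "(\<lambda>n. z (s1 (s2 n))) \<longlonglongrightarrow> Complex a b" by (simp add: tendsto_complex_iff)
  then show ?thesis using strict_mono_compose[OF s1(1) s2(1)]
    by (intro exI[of _ "s1 \<circ> s2"]) (auto simp: convergent_def o_def)
qed

lemma bounded_family_convergent_subseq:
  fixes x :: "nat \<Rightarrow> 'j \<Rightarrow> complex"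
  assumes "finite J" and "\<And>j n. j \<in> J \<Longrightarrow> cmod (x n j) \<le> B"
  shows "\<exists>r. strict_mono r \<and> (\<forall>j\<in>J. convergent (\<lambda>n. x (r n) j))"
  using assms
proof (induction J rule: finite_induct)
  case empty
  show ?case by (rule exI[of _ id]) (auto simp: strict_mono_def)
next
  case (insert j F)
  then obtain r where r: "strict_mono r" "\<forall>j\<in>F. convergent (\<lambda>n. x (r n) j)" by auto
  obtain s where s: "strict_mono s" "convergent (\<lambda>n. x (r (s n)) j)"
    using bounded_complex_convergent_subseq[of "\<lambda>n. x (r n) j" B] insert.prems
    by (auto simp: o_def)
  have "convergent (\<lambda>n. x (r (s n)) j')" if "j' \<in> F" for j'
    using convergent_subseq_convergent[OF r(2)[rule_format, OF that] s(1)] by (simp add: o_def)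
  then show ?case using s(2) strict_mono_compose[OF r(1) s(1)]
    by (intro exI[of _ "\<lambda>n. r (s n)"]) (auto simp: o_def)
qed

lemma minimising_sequence:
  fixes f :: "'a \<Rightarrow> real"
  assumes ne: "S \<noteq> {}" and bdd: "bdd_below (f ` S)"
  obtains s where "\<And>n. s n \<in> S" "\<And>n. f (s n) \<le> Inf (f ` S) + 1"
    "(\<lambda>n. f (s n)) \<longlonglongrightarrow> Inf (f ` S)"
proof -
  have "\<exists>x\<in>S. f x < Inf (f ` S) + inverse (real (Suc n))" for n
    using cInf_less_iff[of "f ` S" "Inf (f ` S) + inverse (real (Suc n))"] ne bdd by simp
  then obtain s where s: "\<And>n. s n \<in> S" "\<And>n. f (s n) < Inf (f ` S) + inverse (real (Suc n))"
    by metis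
  have lower: "Inf (f ` S) \<le> f (s n)" for n using s(1) bdd by (auto intro: cInf_lower)
  have inverse_le_1: "inverse (real (Suc n)) \<le> 1" for n by (simp add: inverse_le_1_iff)
  have "f (s n) \<le> Inf (f ` S) + 1" for n using s(2)[of n] inverse_le_1[of n] by linarith
  moreover have "(\<lambda>n. f (s n)) \<longlonglongrightarrow> Inf (f ` S)"
  proof (rule real_tendsto_sandwich[OF _ _ tendsto_const LIMSEQ_inverse_real_of_nat_add])
    show "\<forall>\<^sub>F n in sequentially. Inf (f ` S) \<le> f (s n)" using lower by simp
    show "\<forall>\<^sub>F n in sequentially. f (s n) \<le> Inf (f ` S) + inverse (real (Suc n))"
      using s(2) by (intro always_eventually allI less_imp_le)
  qed
  ultimately show ?thesis using that s(1) by blast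
qed

(* Each entry of a system is controlled by its potential: |V_p(a)|^2 <= (S_V)_aa <= sqrt (tr S_V^2). *)
lemma entry_sq_le_sqrt_potential:
  assumes p: "p \<in> row_idx m k" and a: "a < d"
  shows "(cmod (V (fst p) $$ (snd p, a)))\<^sup>2 \<le> sqrt (potential m k d V)"
proof -
  have "(cmod (V (fst p) $$ (snd p, a)))\<^sup>2 \<le> (\<Sum>q\<in>row_idx m k. (cmod (V (fst q) $$ (snd q, a)))\<^sup>2)"
    by (rule member_le_sum[OF p]) auto
  also have "\<dots> = Re (cross_entry m k V V a a)"
    unfolding cross_entry_def case_prod_unfold by (simp only: Re_sum Re_cnj_mult)
  also have "\<dots> \<le> sqrt ((cmod (cross_entry m k V V a a))\<^sup>2)"
    using complex_Re_le_cmod by simp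
  also have "\<dots> \<le> sqrt (potential m k d V)"
  proof (rule real_sqrt_le_mono)
    have "(cmod (cross_entry m k V V a a))\<^sup>2 \<le> (\<Sum>b<d. (cmod (cross_entry m k V V a b))\<^sup>2)"
      by (rule member_le_sum) (use a in auto)
    also have "\<dots> \<le> potential m k d V" unfolding potential_def
      by (rule member_le_sum[of a "{..<d}" "\<lambda>a. \<Sum>b<d. (cmod (cross_entry m k V V a b))\<^sup>2"])
         (use a in \<open>auto intro!: sum_nonneg\<close>)
    finally show "(cmod (cross_entry m k V V a a))\<^sup>2 \<le> potential m k d V" .
  qed
  finally show ?thesis .
qed

lemma DRS_entry_bound:
  assumes VW: "(V, W) \<in> DRS m k d v" and X: "X = V \<or> X = W"
    and p: "p \<in> row_idx m k" and a: "a < d"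
  shows "cmod (X (fst p) $$ (snd p, a)) \<le> sqrt (sqrt (FP m d V W))"
proof -
  have "potential m k d X \<le> FP m d V W"
    using X FP_potential[OF DRS_D(1,2)[OF VW]] potential_nonneg[of m k d] by auto
  then have "(cmod (X (fst p) $$ (snd p, a)))\<^sup>2 \<le> sqrt (FP m d V W)"
    using entry_sq_le_sqrt_potential[OF p a, of X] real_sqrt_le_mono order_trans by blast
  then show ?thesis by (rule real_le_rsqrt)
qed

definition entries_tendsto :: "nat \<Rightarrow> (nat \<Rightarrow> nat) \<Rightarrow> nat \<Rightarrow> (nat \<Rightarrow> nat \<Rightarrow> complex mat)
    \<Rightarrow> (nat \<Rightarrow> complex mat) \<Rightarrow> bool" where
  "entries_tendsto m k d Vs V \<longleftrightarrow>
     (\<forall>i<m. \<forall>c<k i. \<forall>a<d. (\<lambda>n. Vs n i $$ (c, a)) \<longlonglongrightarrow> V i $$ (c, a))"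

lemma cross_entry_tendsto:
  assumes "entries_tendsto m k d Ws W" "entries_tendsto m k d Vs V" "a < d" "b < d"
  shows "(\<lambda>n. cross_entry m k (Ws n) (Vs n) a b) \<longlonglongrightarrow> cross_entry m k W V a b"
proof -
  have "(\<lambda>n. cnj (Ws n i $$ (c, a)) * Vs n i $$ (c, b)) \<longlonglongrightarrow> cnj (W i $$ (c, a)) * V i $$ (c, b)"
    if "(i, c) \<in> row_idx m k" for i c
    using assms that unfolding entries_tendsto_def row_idx_def
    by (auto intro!: tendsto_mult tendsto_cnj)
  then show ?thesis unfolding cross_entry_def by (intro tendsto_sum) (auto split: prod.splits)
qed

lemma potential_tendsto:
  assumes "entries_tendsto m k d Vs V"
  shows "(\<lambda>n. potential m k d (Vs n)) \<longlonglongrightarrow> potential m k d V"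
  unfolding potential_def using assms
  by (intro tendsto_sum tendsto_power tendsto_norm cross_entry_tendsto) auto

(* DRS_v is closed under entrywise limits: the norm conditions and the duality relation are
   polynomial identities in the entries. *)
lemma DRS_limit:
  assumes seq: "\<And>n. (Vs n, Ws n) \<in> DRS m k d v"
    and sysV: "is_system m k d V" and sysW: "is_system m k d W"
    and limV: "entries_tendsto m k d Vs V" and limW: "entries_tendsto m k d Ws W"
  shows "(V, W) \<in> DRS m k d v"
proof (rule DRS_intro[OF sysV sysW])
  show "\<forall>i<m. V i * mat_adjoint (V i) = complex_of_real ((v i)\<^sup>2) \<cdot>\<^sub>m 1\<^sub>m (k i)"
  proof (intro allI impI)
    fix i assume i: "i < m"
    have carrier: "V i \<in> carrier_mat (k i) d" "Vs n i \<in> carrier_mat (k i) d" for n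
      using sysV DRS_D(1)[OF seq[of n]] i unfolding is_system_def by auto
    show "V i * mat_adjoint (V i) = complex_of_real ((v i)\<^sup>2) \<cdot>\<^sub>m 1\<^sub>m (k i)"
    proof (rule eq_matI)
      fix c c' assume "c < dim_row (complex_of_real ((v i)\<^sup>2) \<cdot>\<^sub>m 1\<^sub>m (k i))"
        "c' < dim_col (complex_of_real ((v i)\<^sup>2) \<cdot>\<^sub>m 1\<^sub>m (k i))"
      then have cc: "c < k i" "c' < k i" by auto
      have "(\<lambda>n. (Vs n i * mat_adjoint (Vs n i)) $$ (c, c'))
          \<longlonglongrightarrow> (V i * mat_adjoint (V i)) $$ (c, c')"
        unfolding mult_adjoint_index[OF carrier(2) cc] mult_adjoint_index[OF carrier(1) cc]
        using limV i cc unfolding entries_tendsto_def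
        by (auto intro!: tendsto_sum tendsto_mult tendsto_cnj)
      moreover have "(\<lambda>n. (Vs n i * mat_adjoint (Vs n i)) $$ (c, c'))
          \<longlonglongrightarrow> (complex_of_real ((v i)\<^sup>2) \<cdot>\<^sub>m 1\<^sub>m (k i)) $$ (c, c')"
        using DRS_D(3)[OF seq] i by simp
      ultimately show "(V i * mat_adjoint (V i)) $$ (c, c')
          = (complex_of_real ((v i)\<^sup>2) \<cdot>\<^sub>m 1\<^sub>m (k i)) $$ (c, c')"
        by (rule LIMSEQ_unique)
    qed (use carrier in auto)
  qed
  show "cross_op m d W V = 1\<^sub>m d"
  proof (rule eq_matI)
    fix a b assume "a < dim_row (1\<^sub>m d)" "b < dim_col (1\<^sub>m d)"
    then have ab: "a < d" "b < d" by auto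
    have "cross_entry m k (Ws n) (Vs n) a b = 1\<^sub>m d $$ (a, b)" for n
      using cross_op_index[OF DRS_D(2,1)[OF seq[of n]] ab] DRS_D(4)[OF seq[of n]] by simp
    then have "(\<lambda>n. cross_entry m k (Ws n) (Vs n) a b) \<longlonglongrightarrow> 1\<^sub>m d $$ (a, b)" by simp
    with cross_entry_tendsto[OF limW limV ab] have "cross_entry m k W V a b = 1\<^sub>m d $$ (a, b)"
      by (rule LIMSEQ_unique)
    then show "cross_op m d W V $$ (a, b) = 1\<^sub>m d $$ (a, b)"
      using cross_op_index[OF sysW sysV ab] by simp
  qed auto
qed

(* Part (1): a minimising sequence has an entrywise convergent subsequence (all entries are
   bounded by the fourth root of FP); its limit lies in DRS_v and realises the infimum. *)
lemma FP_attains_Inf: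
  assumes ne: "DRS m k d v \<noteq> {}"
  shows "\<exists>(V, W)\<in>DRS m k d v. FP m d V W = Inf ((\<lambda>(V, W). FP m d V W) ` DRS m k d v)"
proof -
  let ?f = "\<lambda>(V, W). FP m d V W"
  define P where "P = Inf (?f ` DRS m k d v)"
  have "FP m d V W \<ge> 0" if "(V, W) \<in> DRS m k d v" for V W
    using FP_potential[OF DRS_D(1,2)[OF that]] potential_nonneg[of m k d] by simp
  then have "bdd_below (?f ` DRS m k d v)"
    unfolding bdd_below_def by (intro exI[of _ 0]) auto
  then obtain s where s: "\<And>n. s n \<in> DRS m k d v" "\<And>n. ?f (s n) \<le> P + 1"
      "(\<lambda>n. ?f (s n)) \<longlonglongrightarrow> P"
    using minimising_sequence[OF ne] unfolding P_def by metis
  define Vs where "Vs n = fst (s n)" for n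
  define Ws where "Ws n = snd (s n)" for n
  have sD: "(Vs n, Ws n) \<in> DRS m k d v" for n using s(1)[of n] by (simp add: Vs_def Ws_def)
  have FP_s: "?f (s n) = FP m d (Vs n) (Ws n)" for n by (simp add: Vs_def Ws_def case_prod_unfold)
  define x where "x n = (\<lambda>(b, p, a). (if b then Vs n else Ws n) (fst p) $$ (snd p, a))" for n
  define J where "J = (UNIV :: bool set) \<times> row_idx m k \<times> {..<d}"
  have entry_bound: "cmod (x n j) \<le> sqrt (sqrt (P + 1))" if "j \<in> J" for j n
  proof -
    obtain b p a where j: "j = (b, p, a)" "p \<in> row_idx m k" "a < d"
      using \<open>j \<in> J\<close> unfolding J_def by auto
    have "cmod (x n j) \<le> sqrt (sqrt (FP m d (Vs n) (Ws n)))"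
      using DRS_entry_bound[OF sD, of "if b then Vs n else Ws n", OF _ j(2,3)]
      unfolding x_def j(1) by simp
    also have "\<dots> \<le> sqrt (sqrt (P + 1))" using s(2)[of n] FP_s by simp
    finally show ?thesis .
  qed
  have "finite J" unfolding J_def by simp
  then obtain r where r: "strict_mono r" "\<forall>j\<in>J. convergent (\<lambda>n. x (r n) j)"
    using bounded_family_convergent_subseq entry_bound by blast
  define Vl where "Vl i = mat (k i) d (\<lambda>(c, a). lim (\<lambda>n. Vs (r n) i $$ (c, a)))" for i
  define Wl where "Wl i = mat (k i) d (\<lambda>(c, a). lim (\<lambda>n. Ws (r n) i $$ (c, a)))" for i
  have sys: "is_system m k d Vl" "is_system m k d Wl" unfolding is_system_def Vl_def Wl_def by auto
  have conv: "convergent (\<lambda>n. Vs (r n) i $$ (c, a))" "convergent (\<lambda>n. Ws (r n) i $$ (c, a))"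
    if "i < m" "c < k i" "a < d" for i c a
    using r(2)[rule_format, of "(True, (i, c), a)"] r(2)[rule_format, of "(False, (i, c), a)"] that
    unfolding J_def x_def row_idx_def by auto
  have lim: "entries_tendsto m k d (\<lambda>n. Vs (r n)) Vl" "entries_tendsto m k d (\<lambda>n. Ws (r n)) Wl"
    unfolding entries_tendsto_def Vl_def Wl_def
    using conv by (auto simp: convergent_LIMSEQ_iff)
  have "(Vl, Wl) \<in> DRS m k d v" by (rule DRS_limit[OF sD sys lim])
  moreover have "(\<lambda>n. FP m d (Vs (r n)) (Ws (r n))) \<longlonglongrightarrow> FP m d Vl Wl"
    unfolding FP_potential[OF DRS_D(1,2)[OF sD]] FP_potential[OF sys]
    by (intro tendsto_add potential_tendsto lim)
  moreover have "(\<lambda>n. FP m d (Vs (r n)) (Ws (r n))) \<longlonglongrightarrow> P"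
    using LIMSEQ_subseq_LIMSEQ[OF s(3) r(1)] FP_s by (simp add: o_def)
  ultimately show ?thesis using LIMSEQ_unique unfolding P_def by fastforce
qed

theorem proposition6p1:
  fixes m d :: nat and k :: "nat \<Rightarrow> nat" and v :: "nat \<Rightarrow> real"
  assumes "m \<ge> 1" and "d \<ge> 1"
    and "\<forall>i<m. 1 \<le> k i \<and> k i \<le> d"
    and "\<forall>i<m. v i > 0"
    and "P_v m k d v \<noteq> {}"
  defines "\<tau> \<equiv> (\<Sum>i<m. (v i)\<^sup>2 * real (k i))"
    and "p \<equiv> Inf ((\<lambda>(V, W). FP m d V W) ` DRS m k d v)"
  shows "(\<exists>(V, W)\<in>DRS m k d v. FP m d V W = p)
    \<and> (\<forall>(V, W)\<in>DRS m k d v. FP m d V W \<ge> p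
          \<and> p \<ge> (\<tau> ^ 4 + real d ^ 4) / (real d * \<tau>\<^sup>2))
    \<and> (\<forall>(V, W)\<in>DRS m k d v.
          FP m d V W = (\<tau> ^ 4 + real d ^ 4) / (real d * \<tau>\<^sup>2) \<longleftrightarrow>
          (RS_op m d V = complex_of_real (\<tau> / real d) \<cdot>\<^sub>m 1\<^sub>m d
           \<and> (\<forall>i<m. W i = complex_of_real (real d / \<tau>) \<cdot>\<^sub>m V i)
           \<and> (\<forall>i<m. W i = canon_dual m d V i)))"
proof -
  have d: "d > 0" using assms(2) by simp
  have tau: "\<tau> = (\<Sum>i<m. (v i)\<^sup>2 * real (k i))" by (simp add: \<tau>_def)
  have tau_pos: "\<tau> > 0"
  proof -
    have "v 0 > 0" "k 0 \<ge> 1" using assms(1,3,4) by auto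
    then have "0 < (v 0)\<^sup>2 * real (k 0)" by simp
    also have "\<dots> \<le> \<tau>" unfolding \<tau>_def by (rule member_le_sum) (use assms(1) in auto)
    finally show ?thesis .
  qed
  note lower = FP_lower_bound[OF _ d tau tau_pos]
  have ne: "DRS m k d v \<noteq> {}" by (rule DRS_nonempty[OF assms(5)])
  have "bdd_below ((\<lambda>(V, W). FP m d V W) ` DRS m k d v)"
    unfolding bdd_below_def using lower by fast
  then have p_le: "p \<le> FP m d V W" if "(V, W) \<in> DRS m k d v" for V W
    unfolding p_def using that by (auto intro!: cInf_lower)
  have p_ge: "(\<tau> ^ 4 + real d ^ 4) / (real d * \<tau>\<^sup>2) \<le> p"
    unfolding p_def using ne lower by (intro cInf_greatest) auto
  show ?thesis
    using FP_attains_Inf[OF ne, folded p_def] p_le p_ge FP_eq_bound_iff[OF _ d tau tau_pos]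
    by auto
qed

end
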